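(* Suppose the forbidden moves $T4$, one of $F1$ or $F2$, and one of $F3$ or $F4$ are allowed, in addition to the moves $R1,R2,R3,T2,T3$. Then the moves $Fu$ and $Fv$ can be realized by finite sequences of these moves. Here $Fu$ (respectively $Fv$) is the move on Gauss diagrams which, given an arrowhead of one chord and an arrowtail of another chord that are separated on the circle by exactly one bar and no other marked point, where the two chords have the same sign (respectively opposite signs), exchanges the positions of this arrowhead and this arrowtail (the bar remaining between them, orientations and signs of chords unchanged).
   Context: A twisted knot diagram is a virtual knot diagram (an oriented generic immersed circle in the plane whose double points are either classical crossings, carrying over/under information, or virtual crossings, carrying none) which may in addition carry finitely many bars: short segments marked transversally on arcs, away from crossings. Twisted knots are equivalence classes of such diagrams under the classical Reidemeister moves $R1,R2,R3$, the virtual Reidemeister moves $V1$–$V4$, and the twisted Reidemeister moves $T1$ (a bar slides through a virtual crossing), $T2$ (two consecutive bars on an arc cancel), $T3$ (a classical crossing having a bar on each of its four incident arcs next to the crossing is replaced by the crossing with over- and under-strand exchanged, the four bars being removed). Gauss diagram of a twisted knot diagram: an oriented circle (the parametrizing circle of the knot) on which are marked, in the order met when traversing the knot from a basepoint, the two preimages of each classical crossing and one point for each bar. For each classical crossing a chord joins its two preimages, oriented from the overcrossing preimage (the arrowtail) to the undercrossing preimage (the arrowhead), and labelled by the sign $\varepsilon\in\{+,-\}$ of the crossing. Virtual crossings are not recorded. Two marked points (chord endpoints or bars) are called adjacent if no other marked point lies between them on the circle. Moves on Gauss diagrams (each may be applied in either direction): - $R1,R2,R3$: the standard Gauss-diagram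 versions of the classical Reidemeister moves, i.e. the changes of Gauss diagrams induced by classical Reidemeister moves on diagrams (e.g. $R1$ adds or removes a chord of any orientation and sign whose two endpoints are adjacent). - $T2$: add or remove two adjacent bars. - $T3$: if each endpoint of a chord is immediately preceded and immediately followed by a bar, remove these four bars, reverse the orientation of the chord and change its sign (the Gauss-diagram version of the move $T3$ above). Virtual moves and $T1$ do not change the Gauss diagram. Forbidden moves: - $T4$: add or remove a chord (of any orientation and sign) whose two endpoints are separated by exactly one bar and no other marked point (a curl with a bar). - $F1$: exchange the positions of two adjacent arrowheads of different chords (signs arbitrary). - $F2$: exchange the positions of two adjacent arrowtails of different chords (signs arbitrary). - $F3$: if two arrowheads of different chords are separated by exactly one bar and no other marked point, exchange their positions (the bar stays between them). - $F4$: the same as $F3$ for two arrowtails. *)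

theory Defs
  imports Main
begin

text \<open>A marked point on the parametrizing circle is either a bar, or an endpoint
  of a chord: Pt c h s is an endpoint of chord c, which is the arrowhead iff h
  (otherwise the arrowtail), and the chord has sign + iff s.
  A Gauss diagram is represented by the word of marked points read from a basepoint;
  changing the basepoint (rotation) or renaming chords gives the same diagram,
  which is accounted for by the moves Rot and Relabel below.\<close>

datatype mpoint = Bar | Pt nat bool bool

definition chords :: "mpoint list \<Rightarrow> nat set" where
  "chords w = {c. \<exists>h s. Pt c h s \<in> set w}"

definition gauss_word :: "mpoint list \<Rightarrow> bool" where
  "gauss_word w \<longleftrightarrow>
     (\<forall>c \<in> chords w. \<forall>h. length (filter (\<lambda>x. \<exists>s. x = Pt c h s) w) = 1) \<and>
     (\<forall>c h s h' s'. Pt c h s \<in> set w \<longrightarrow> Pt c h' s' \<in> set w \<longrightarrow> s = s')"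

fun relab :: "(nat \<Rightarrow> nat) \<Rightarrow> mpoint \<Rightarrow> mpoint" where
  "relab f Bar = Bar"
| "relab f (Pt c h s) = Pt (f c) h s"

section \<open>The moves (each written in one direction; they are used in both directions)\<close>

definition R1_add :: "mpoint list \<Rightarrow> mpoint list \<Rightarrow> bool" where
  "R1_add D D' \<longleftrightarrow> (\<exists>u v c h s. D = u @ v \<and> c \<notin> chords D \<and>
      D' = u @ [Pt c h s, Pt c (\<not> h) s] @ v)"

definition R2_add :: "mpoint list \<Rightarrow> mpoint list \<Rightarrow> bool" where
  "R2_add D D' \<longleftrightarrow> (\<exists>u v w c1 c2 s X. D = u @ v @ w \<and> c1 \<notin> chords D \<and> c2 \<notin> chords D \<and>
      c1 \<noteq> c2 \<and>
      (X = [Pt c1 True s, Pt c2 True (\<not> s)] \<or> X = [Pt c2 True (\<not> s), Pt c1 True s]) \<and>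
      D' = u @ [Pt c1 False s, Pt c2 False (\<not> s)] @ v @ X @ w)"

text \<open>R3 configuration: three strands (top T, middle M, bottom B) and chords
  a (T over M), b (T over B), c (M over B), with signs sa sb sc.
  oT: along T, a is met before b;  oM: along M, a before c;  oB: along B, b before c.
  A triangle with these data occurs in a planar diagram iff the following parity
  conditions hold (they are invariant under reversing all three orders).\<close>
definition r3_ok :: "bool \<Rightarrow> bool \<Rightarrow> bool \<Rightarrow> bool \<Rightarrow> bool \<Rightarrow> bool \<Rightarrow> bool" where
  "r3_ok sa sb sc oT oM oB \<longleftrightarrow> ((oT \<noteq> oM) = (sb \<noteq> sc)) \<and> ((oM \<noteq> oB) = (sa \<noteq> sb))"

definition ord2 :: "bool \<Rightarrow> mpoint \<Rightarrow> mpoint \<Rightarrow> mpoint list" where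
  "ord2 b x y = (if b then [x, y] else [y, x])"

definition r3_config ::
  "nat \<Rightarrow> nat \<Rightarrow> nat \<Rightarrow> bool \<Rightarrow> bool \<Rightarrow> bool \<Rightarrow> bool \<Rightarrow> bool \<Rightarrow> bool \<Rightarrow> bool \<Rightarrow>
   mpoint list \<Rightarrow> mpoint list \<Rightarrow> mpoint list \<Rightarrow> mpoint list \<Rightarrow> mpoint list" where
  "r3_config a b c sa sb sc oT oM oB TMB u1 u2 u3 u4 =
     (let PT = ord2 oT (Pt a False sa) (Pt b False sb);
          PM = ord2 oM (Pt a True sa) (Pt c False sc);
          PB = ord2 oB (Pt b True sb) (Pt c True sc)
      in if TMB then u1 @ PT @ u2 @ PM @ u3 @ PB @ u4
         else u1 @ PT @ u2 @ PB @ u3 @ PM @ u4)"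

definition R3_move :: "mpoint list \<Rightarrow> mpoint list \<Rightarrow> bool" where
  "R3_move D D' \<longleftrightarrow> (\<exists>a b c sa sb sc oT oM oB TMB u1 u2 u3 u4.
      a \<noteq> b \<and> a \<noteq> c \<and> b \<noteq> c \<and> r3_ok sa sb sc oT oM oB \<and>
      D = r3_config a b c sa sb sc oT oM oB TMB u1 u2 u3 u4 \<and>
      D' = r3_config a b c sa sb sc (\<not> oT) (\<not> oM) (\<not> oB) TMB u1 u2 u3 u4)"

definition T2_add :: "mpoint list \<Rightarrow> mpoint list \<Rightarrow> bool" where
  "T2_add D D' \<longleftrightarrow> (\<exists>u v. D = u @ v \<and> D' = u @ [Bar, Bar] @ v)"

definition T3_move :: "mpoint list \<Rightarrow> mpoint list \<Rightarrow> bool" where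
  "T3_move D D' \<longleftrightarrow> (\<exists>u1 u2 u3 c h s.
      D = u1 @ [Bar, Pt c h s, Bar] @ u2 @ [Bar, Pt c (\<not> h) s, Bar] @ u3 \<and>
      D' = u1 @ [Pt c (\<not> h) (\<not> s)] @ u2 @ [Pt c h (\<not> s)] @ u3)"

definition T4_add :: "mpoint list \<Rightarrow> mpoint list \<Rightarrow> bool" where
  "T4_add D D' \<longleftrightarrow> (\<exists>u v c h s. D = u @ v \<and> c \<notin> chords D \<and>
      D' = u @ [Pt c h s, Bar, Pt c (\<not> h) s] @ v)"

definition F12_move :: "bool \<Rightarrow> mpoint list \<Rightarrow> mpoint list \<Rightarrow> bool" where
  "F12_move h D D' \<longleftrightarrow> (\<exists>u v c d s t. c \<noteq> d \<and>
      D = u @ [Pt c h s, Pt d h t] @ v \<and> D' = u @ [Pt d h t, Pt c h s] @ v)"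

definition F34_move :: "bool \<Rightarrow> mpoint list \<Rightarrow> mpoint list \<Rightarrow> bool" where
  "F34_move h D D' \<longleftrightarrow> (\<exists>u v c d s t. c \<noteq> d \<and>
      D = u @ [Pt c h s, Bar, Pt d h t] @ v \<and> D' = u @ [Pt d h t, Bar, Pt c h s] @ v)"

definition Fuv_move :: "bool \<Rightarrow> mpoint list \<Rightarrow> mpoint list \<Rightarrow> bool" where
  "Fuv_move same D D' \<longleftrightarrow> (\<exists>u v c d h s t. c \<noteq> d \<and> (t = s \<longleftrightarrow> same) \<and>
      D = u @ [Pt c h s, Bar, Pt d (\<not> h) t] @ v \<and> D' = u @ [Pt d (\<not> h) t, Bar, Pt c h s] @ v)"

abbreviation Fu_move where "Fu_move \<equiv> Fuv_move True"
abbreviation Fv_move where "Fv_move \<equiv> Fuv_move False"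

datatype move = MR1 | MR2 | MR3 | MT2 | MT3 | MT4 | MF1 | MF2 | MF3 | MF4

fun move_rel :: "move \<Rightarrow> mpoint list \<Rightarrow> mpoint list \<Rightarrow> bool" where
  "move_rel MR1 = R1_add"
| "move_rel MR2 = R2_add"
| "move_rel MR3 = R3_move"
| "move_rel MT2 = T2_add"
| "move_rel MT3 = T3_move"
| "move_rel MT4 = T4_add"
| "move_rel MF1 = F12_move True"
| "move_rel MF2 = F12_move False"
| "move_rel MF3 = F34_move True"
| "move_rel MF4 = F34_move False"

inductive gstep :: "move set \<Rightarrow> mpoint list \<Rightarrow> mpoint list \<Rightarrow> bool" for M where
  fwd: "m \<in> M \<Longrightarrow> move_rel m D D' \<Longrightarrow> gstep M D D'"
| bwd: "m \<in> M \<Longrightarrow> move_rel m D' D \<Longrightarrow> gstep M D D'"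
| rot: "gstep M D (rotate1 D)"
| relabel: "inj f \<Longrightarrow> gstep M D (map (relab f) D)"

abbreviation realizable :: "move set \<Rightarrow> mpoint list \<Rightarrow> mpoint list \<Rightarrow> bool" where
  "realizable M D D' \<equiv> (gstep M)\<^sup>*\<^sup>* D D'"

end

theory Submission
  imports Defs
begin

text \<open>Move T3 read backwards flips a chord: it reverses the chord, changes its sign and puts a bar
  on each side of both endpoints. Conjugating by flips turns F1 into F2 and vice versa (the bars
  created between the two swapped endpoints cancel by T2), so adjacent arrowheads and adjacent
  arrowtails can both be exchanged. With both exchanges, a curl with a bar (T4) lets a bar slide
  past any chord endpoint. Fu and Fv follow: flip the chord d, so that its endpoint next to c
  becomes of the same kind as c, exchange the two endpoints, slide the bar back between them and
  unflip d.\<close>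

fun on_chord :: "nat \<Rightarrow> mpoint \<Rightarrow> bool" where
  "on_chord c Bar \<longleftrightarrow> False"
| "on_chord c (Pt d k r) \<longleftrightarrow> d = c"

definition simple_chord :: "nat \<Rightarrow> mpoint list \<Rightarrow> bool" where
  "simple_chord c w \<longleftrightarrow> (\<exists>k r. filter (on_chord c) w = [Pt c k r, Pt c (\<not> k) r])"

fun flip_point :: "nat \<Rightarrow> mpoint \<Rightarrow> mpoint list" where
  "flip_point c Bar = [Bar]"
| "flip_point c (Pt d k r) =
    (if d = c then [Bar, Pt d (\<not> k) (\<not> r), Bar] else [Pt d k r])"

definition flip_chord :: "nat \<Rightarrow> mpoint list \<Rightarrow> mpoint list" where
  "flip_chord c w = concat (map (flip_point c) w)"

lemma flip_chord_simps [simp]: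
  "flip_chord c [] = []"
  "flip_chord c (p # w) = flip_point c p @ flip_chord c w"
  "flip_chord c (w @ w') = flip_chord c w @ flip_chord c w'"
  by (simp_all add: flip_chord_def)

lemma chords_simps [simp]:
  "chords [] = {}"
  "chords (Bar # w) = chords w"
  "chords (Pt c k r # w) = insert c (chords w)"
  "chords (w @ w') = chords w \<union> chords w'"
  by (auto simp: chords_def)

lemma finite_chords: "finite (chords w)"
proof (induction w)
  case (Cons p w)
  then show ?case by (cases p) auto
qed simp

lemma notin_chords_iff: "c \<notin> chords w \<longleftrightarrow> (\<forall>p \<in> set w. \<not> on_chord c p)"
proof (induction w)
  case (Cons p w)
  then show ?case by (cases p) auto
qed simp

lemma filter_on_chord_fresh [simp]: "c \<notin> chords w \<Longrightarrow> filter (on_chord c) w = []"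
  by (simp add: notin_chords_iff filter_empty_conv)

lemma flip_chord_fresh [simp]: "c \<notin> chords w \<Longrightarrow> flip_chord c w = w"
proof (induction w)
  case (Cons p w)
  then show ?case by (cases p) auto
qed simp

lemma filter_on_chord_flip_chord [simp]:
  "c \<noteq> d \<Longrightarrow> filter (on_chord c) (flip_chord d w) = filter (on_chord c) w"
proof (induction w)
  case (Cons p w)
  then show ?case by (cases p) auto
qed simp

lemma chords_flip_chord [simp]: "chords (flip_chord c w) = chords w"
proof (induction w)
  case (Cons p w)
  then show ?case by (cases p) auto
qed simp

lemma simple_chordE:
  assumes "simple_chord c w"
  obtains u m v k r where "w = u @ [Pt c k r] @ m @ [Pt c (\<not> k) r] @ v"
    and "c \<notin> chords (u @ m @ v)"
proof -
  from assms obtain k r where "filter (on_chord c) w = [Pt c k r, Pt c (\<not> k) r]"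
    unfolding simple_chord_def by blast
  from filter_eq_ConsD[OF this] obtain u w' where w: "w = u @ Pt c k r # w'"
    "\<forall>p \<in> set u. \<not> on_chord c p" and w': "[Pt c (\<not> k) r] = filter (on_chord c) w'"
    by blast
  from filter_eq_ConsD[OF w'[symmetric]] obtain m v where "w' = m @ Pt c (\<not> k) r # v"
    "\<forall>p \<in> set m. \<not> on_chord c p" "\<forall>p \<in> set v. \<not> on_chord c p"
    by (auto simp flip: filter_empty_conv)
  with w show thesis
    by (intro that[of u k r m v]) (simp_all add: notin_chords_iff)
qed

lemma simple_chord_flip_chord: "simple_chord c w \<Longrightarrow> simple_chord c (flip_chord d w)"
proof (cases "c = d")
  case True
  assume "simple_chord c w"
  then obtain u m v k r where "w = u @ [Pt c k r] @ m @ [Pt c (\<not> k) r] @ v"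
    and "c \<notin> chords (u @ m @ v)"
    by (rule simple_chordE)
  with True show ?thesis
    unfolding simple_chord_def by auto
qed (simp add: simple_chord_def)

lemma gauss_word_simple_chord:
  assumes "gauss_word w" and "c \<in> chords w"
  shows "simple_chord c w"
proof -
  define ps where "ps = filter (on_chord c) w"
  define is_end where "is_end k p \<longleftrightarrow> (\<exists>s. p = Pt c k s)" for k p
  have ps_points: "\<exists>k r. p = Pt c k r" if "p \<in> set ps" for p
  proof -
    have "on_chord c p"
      using that by (simp add: ps_def)
    then show ?thesis
      by (cases p) auto
  qed
  have one_end: "length (filter (is_end k) ps) = 1" for k
  proof -
    have "filter (is_end k) ps = filter (\<lambda>x. \<exists>s. x = Pt c k s) w"
      unfolding ps_def is_end_def filter_filter by (rule filter_cong) auto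
    then show ?thesis
      using assms unfolding gauss_word_def by simp
  qed
  have "filter (\<lambda>p. \<not> is_end True p) ps = filter (is_end False) ps"
    using ps_points unfolding is_end_def by (intro filter_cong) auto
  then have "length ps = 2"
    using sum_length_filter_compl[of "is_end True" ps] one_end by simp
  then obtain p1 p2 where ps: "ps = [p1, p2]"
    by (auto simp: numeral_2_eq_2 length_Suc_conv)
  then obtain k1 r1 k2 r2 where p1: "p1 = Pt c k1 r1" and p2: "p2 = Pt c k2 r2"
    using ps_points by (metis list.set_intros)
  have "Pt c k1 r1 \<in> set w" "Pt c k2 r2 \<in> set w"
    using ps p1 p2 unfolding ps_def by (metis filter_is_subset list.set_intros subsetD)+
  then have "r2 = r1"
    using assms(1) unfolding gauss_word_def by blast
  moreover have "k2 = (\<not> k1)"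
    using one_end[of k1] ps p1 p2 unfolding is_end_def by (cases k1; cases k2) auto
  ultimately show ?thesis
    using ps p1 p2 unfolding simple_chord_def ps_def by blast
qed

lemma realizable_move:
  "m \<in> M \<Longrightarrow> move_rel m D D' \<Longrightarrow> realizable M D D'"
  by (rule r_into_rtranclp, rule gstep.fwd)

lemma realizable_move_inverse:
  "m \<in> M \<Longrightarrow> move_rel m D' D \<Longrightarrow> realizable M D D'"
  by (rule r_into_rtranclp, rule gstep.bwd)

locale moves_T2_T3_T4_F12 =
  fixes M :: "move set"
  assumes T2_allowed: "MT2 \<in> M" and T3_allowed: "MT3 \<in> M" and T4_allowed: "MT4 \<in> M"
    and F12_allowed: "MF1 \<in> M \<or> MF2 \<in> M"
begin

lemma T2_insert: "realizable M (u @ v) (u @ [Bar, Bar] @ v)"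
  using T2_allowed by (intro realizable_move[of MT2]) (auto simp: T2_add_def)

lemma T2_delete: "realizable M (u @ [Bar, Bar] @ v) (u @ v)"
  using T2_allowed by (intro realizable_move_inverse[of MT2]) (auto simp: T2_add_def)

lemma T4_insert:
  "f \<notin> chords (u @ v) \<Longrightarrow>
    realizable M (u @ v) (u @ [Pt f k r, Bar, Pt f (\<not> k) r] @ v)"
  using T4_allowed by (intro realizable_move[of MT4]) (simp_all add: T4_add_def, blast)

lemma T4_delete:
  "f \<notin> chords (u @ v) \<Longrightarrow>
    realizable M (u @ [Pt f k r, Bar, Pt f (\<not> k) r] @ v) (u @ v)"
  using T4_allowed by (intro realizable_move_inverse[of MT4]) (simp_all add: T4_add_def, blast)

lemma F12_realizable:
  obtains a where
    "\<And>u v c d r q. c \<noteq> d \<Longrightarrow>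
      realizable M (u @ [Pt c a r, Pt d a q] @ v) (u @ [Pt d a q, Pt c a r] @ v)"
proof -
  obtain m a where "m \<in> M" "move_rel m = F12_move a"
    using F12_allowed by (metis move_rel.simps(7,8))
  then show thesis
    by (intro that[of a] realizable_move[of m]) (simp_all add: F12_move_def, blast)
qed

lemma flip_chord_realizable:
  assumes "simple_chord c w"
  shows "realizable M w (flip_chord c w)" and "realizable M (flip_chord c w) w"
proof -
  obtain u m v k r where w: "w = u @ [Pt c k r] @ m @ [Pt c (\<not> k) r] @ v"
    and "c \<notin> chords (u @ m @ v)"
    using assms by (rule simple_chordE)
  then have "T3_move (flip_chord c w) w"
    unfolding T3_move_def by (intro exI[of _ u] exI[of _ m] exI[of _ v]) auto
  then show "realizable M w (flip_chord c w)" and "realizable M (flip_chord c w) w"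
    using T3_allowed by (auto intro: realizable_move realizable_move_inverse)
qed

lemma realizable_if_flipped:
  assumes "simple_chord c w" and "simple_chord c w'"
    and "realizable M (flip_chord c w) (flip_chord c w')"
  shows "realizable M w w'"
  using flip_chord_realizable(1)[OF assms(1)] assms(3) flip_chord_realizable(2)[OF assms(2)]
  by (rule rtranclp_trans[OF rtranclp_trans])

lemma swap_adjacent:
  assumes "c \<noteq> d"
    and "simple_chord c (u @ [Pt c k r, Pt d k q] @ v)"
    and "simple_chord d (u @ [Pt c k r, Pt d k q] @ v)"
  shows "realizable M (u @ [Pt c k r, Pt d k q] @ v) (u @ [Pt d k q, Pt c k r] @ v)"
    (is "realizable M ?w ?w'")
proof -
  obtain a where F12: "\<And>u v c d r q. c \<noteq> d \<Longrightarrow>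
      realizable M (u @ [Pt c a r, Pt d a q] @ v) (u @ [Pt d a q, Pt c a r] @ v)"
    using F12_realizable by blast
  show ?thesis
  proof (cases "k = a")
    case True
    with F12 \<open>c \<noteq> d\<close> show ?thesis by blast
  next
    case False
    then have a: "a = (\<not> k)" by simp
    define u' v' where "u' = flip_chord c (flip_chord d u)"
      and "v' = flip_chord c (flip_chord d v)"
    have "realizable M (flip_chord c (flip_chord d ?w))
        (u' @ [Bar, Pt c a (\<not> r), Pt d a (\<not> q), Bar] @ v')"
      using T2_delete[of "u' @ [Bar, Pt c a (\<not> r)]" "[Pt d a (\<not> q), Bar] @ v'"]
        a \<open>c \<noteq> d\<close> by (simp add: u'_def v'_def)
    also have "realizable M ... (u' @ [Bar, Pt d a (\<not> q), Pt c a (\<not> r), Bar] @ v')"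
      using F12[where u = "u' @ [Bar]" and v = "Bar # v'"] \<open>c \<noteq> d\<close> by simp
    also have "realizable M ... (flip_chord c (flip_chord d ?w'))"
      using T2_insert[of "u' @ [Bar, Pt d a (\<not> q)]" "[Pt c a (\<not> r), Bar] @ v'"]
        a \<open>c \<noteq> d\<close> by (simp add: u'_def v'_def)
    finally have
      "realizable M (flip_chord c (flip_chord d ?w)) (flip_chord c (flip_chord d ?w'))" .
    moreover have "simple_chord c ?w'" "simple_chord d ?w'"
      using assms by (simp_all add: simple_chord_def)
    ultimately show ?thesis
      using assms by (meson realizable_if_flipped simple_chord_flip_chord)
  qed
qed

lemma slide_bar:
  assumes x: "simple_chord x (u @ [Pt x k r] @ v)"
  shows "realizable M (u @ [Pt x k r, Bar] @ v) (u @ [Bar, Pt x k r] @ v)"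
proof -
  obtain f where f: "f \<notin> chords (u @ [Pt x k r] @ v)"
    using ex_new_if_finite[OF infinite_UNIV_nat finite_chords] by blast
  define u' v' where "u' = flip_chord x u" and "v' = flip_chord x v"
  let ?x = "Pt x k r" and ?x' = "Pt x (\<not> k) (\<not> r)"
  let ?f = "Pt f k True" and ?f' = "Pt f (\<not> k) True"
  have x': "simple_chord x (u' @ [?x'] @ v')"
    using simple_chord_flip_chord[OF x, of x] by (simp add: u'_def v'_def simple_chord_def)
  have "realizable M (u @ [?x, Bar] @ v) (u @ [?f', Bar, ?f, ?x, Bar] @ v)"
    using T4_insert[of f u "[?x, Bar] @ v" "\<not> k" True] f by simp
  also have "realizable M ... (u @ [?f', Bar, ?x, ?f, Bar] @ v)"
    using swap_adjacent[of f x "u @ [?f', Bar]" k True r "Bar # v"] f x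
    by (auto simp: simple_chord_def)
  also have "realizable M ... (u' @ [?f', Bar, Bar, ?x', Bar, ?f, Bar] @ v')"
    using flip_chord_realizable(1)[of x "u @ [?f', Bar, ?x, ?f, Bar] @ v"] f x
    by (auto simp: simple_chord_def u'_def v'_def)
  also have "realizable M ... (u' @ [?f', ?x', Bar, ?f, Bar] @ v')"
    using T2_delete[of "u' @ [?f']"] by simp
  also have "realizable M ... (u' @ [?x', ?f', Bar, ?f, Bar] @ v')"
    using swap_adjacent[of f x u' "\<not> k" True "\<not> r" "[Bar, ?f, Bar] @ v'"] f x'
    by (auto simp: simple_chord_def u'_def v'_def)
  also have "realizable M ... (u' @ [?x', Bar] @ v')"
    using T4_delete[of f "u' @ [?x']" "Bar # v'" "\<not> k" True] f by (simp add: u'_def v'_def)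
  also have "realizable M ... (u' @ [Bar, Bar, ?x', Bar] @ v')"
    using T2_insert[of u'] by simp
  also have "realizable M ... (u @ [Bar, ?x] @ v)"
    using flip_chord_realizable(2)[of x "u @ [Bar, ?x] @ v"] x
    by (simp add: simple_chord_def u'_def v'_def)
  finally show ?thesis .
qed

lemma exchange_across_bar:
  assumes "c \<noteq> d"
    and c: "simple_chord c (u @ [Pt c h s, Bar, Pt d (\<not> h) t] @ v)"
    and d: "simple_chord d (u @ [Pt c h s, Bar, Pt d (\<not> h) t] @ v)"
  shows "realizable M (u @ [Pt c h s, Bar, Pt d (\<not> h) t] @ v)
    (u @ [Pt d (\<not> h) t, Bar, Pt c h s] @ v)" (is "realizable M ?w ?w'")
proof -
  define u' v' where "u' = flip_chord d u" and "v' = flip_chord d v"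
  let ?c = "Pt c h s" and ?d' = "Pt d h (\<not> t)"
  have c': "simple_chord c (u' @ [?c, ?d'] @ v')"
    using c \<open>c \<noteq> d\<close> by (simp add: simple_chord_def u'_def v'_def)
  have d': "simple_chord d (u' @ [?c, ?d'] @ v')"
    using simple_chord_flip_chord[OF d, of d] \<open>c \<noteq> d\<close>
    by (simp add: simple_chord_def u'_def v'_def)
  have "realizable M (flip_chord d ?w) (u' @ [?c, ?d', Bar] @ v')"
    using T2_delete[of "u' @ [?c]" "[?d', Bar] @ v'"] \<open>c \<noteq> d\<close> by (simp add: u'_def v'_def)
  also have "realizable M ... (u' @ [?d', ?c, Bar] @ v')"
    using swap_adjacent[of c d u' h s "\<not> t" "Bar # v'"] \<open>c \<noteq> d\<close> c' d'
    by (simp add: simple_chord_def)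
  also have "realizable M ... (u' @ [?d', Bar, ?c] @ v')"
    using slide_bar[of c "u' @ [?d']" h s v'] c' \<open>c \<noteq> d\<close> by (simp add: simple_chord_def)
  also have "realizable M ... (u' @ [Bar, ?d', ?c] @ v')"
    using slide_bar[of d u' h "\<not> t" "?c # v'"] d' \<open>c \<noteq> d\<close> by (simp add: simple_chord_def)
  also have "realizable M ... (flip_chord d ?w')"
    using T2_insert[of "u' @ [Bar, ?d']" "?c # v'"] \<open>c \<noteq> d\<close> by (simp add: u'_def v'_def)
  finally have flipped: "realizable M (flip_chord d ?w) (flip_chord d ?w')" .
  have d_exchanged: "simple_chord d ?w'"
    using d \<open>c \<noteq> d\<close> by (simp add: simple_chord_def)
  from d d_exchanged flipped show ?thesis
    by (rule realizable_if_flipped)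
qed

end

theorem lemma1:
  assumes "Fa \<in> {MF1, MF2}" and "Fb \<in> {MF3, MF4}"
    and "gauss_word D"
    and "Fu_move D D' \<or> Fv_move D D'"
  shows "realizable {MR1, MR2, MR3, MT2, MT3, MT4, Fa, Fb} D D'"
proof -
  interpret moves_T2_T3_T4_F12 "{MR1, MR2, MR3, MT2, MT3, MT4, Fa, Fb}"
    using assms(1) by unfold_locales auto
  obtain u v c d h s t where "c \<noteq> d"
    and D: "D = u @ [Pt c h s, Bar, Pt d (\<not> h) t] @ v"
    and D': "D' = u @ [Pt d (\<not> h) t, Bar, Pt c h s] @ v"
    using assms(4) unfolding Fuv_move_def by blast
  have "simple_chord c D" "simple_chord d D"
    using gauss_word_simple_chord[OF assms(3)] D by auto
  with \<open>c \<noteq> d\<close> show ?thesis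
    unfolding D D' by (rule exchange_across_bar)
qed

end
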